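(* For every $q>1$ and every positive increasing sequence $\{M_j\}_{j\ge1}$ of real numbers, $$\liminf_{j\to\infty}\frac{j\,(M_j-M_{j-1})}{M_j^{\,q}}=0.$$ *)

theory Defs
  imports "HOL-Analysis.Analysis"
begin

end

theory Submission
  imports Defs "HOL-Analysis.Analysis"
begin

text \<open>
  Since \<open>x powr -q\<close> decreases, \<open>(M j - M (j - 1)) / M j powr q\<close> is at most the
  integral of \<open>x powr -q\<close> from \<open>M (j - 1)\<close> to \<open>M j\<close>. For \<open>q > 1\<close> these integrals
  telescope to at most \<open>M 1 powr (1 - q) / (q - 1)\<close>, so the increments are summable. If the
  liminf were \<open>> e > 0\<close>, the increments would eventually exceed \<open>e / j\<close>, and the
  harmonic series would converge.
\<close>

lemma diff_div_powr_le_powr_diff: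
  fixes a b q :: real
  assumes "0 \<le> q" "q \<noteq> 1" "0 < a" "a \<le> b"
  shows "(b - a) / b powr q \<le> (a powr (1 - q) - b powr (1 - q)) / (q - 1)"
proof (cases "a = b")
  case False
  with assms have "a < b" by simp
  have deriv: "((\<lambda>x. x powr (1 - q)) has_real_derivative (1 - q) * x powr - q) (at x)"
    if "a \<le> x" "x \<le> b" for x
    using that assms by (auto intro!: derivative_eq_intros)
  obtain z where z: "a < z" "z < b"
    "b powr (1 - q) - a powr (1 - q) = (b - a) * ((1 - q) * z powr - q)"
    using MVT2[OF \<open>a < b\<close> deriv] by blast
  have "(b - a) / b powr q = (b - a) * b powr - q"
    by (simp add: powr_minus_divide)
  also have "\<dots> \<le> (b - a) * z powr - q"
    using z assms by (intro mult_left_mono powr_mono2') auto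
  also have "\<dots> = (a powr (1 - q) - b powr (1 - q)) / (q - 1)"
    using z(3) assms by (simp add: field_simps)
  finally show ?thesis .
qed simp

lemma summable_increments_div_powr:
  fixes M :: "nat \<Rightarrow> real" and q :: real
  assumes "q > 1" and "\<And>n. M n > 0" and "incseq M"
  shows "summable (\<lambda>n. (M (Suc n) - M n) / M (Suc n) powr q)"
proof (rule summableI_nonneg_bounded)
  define F where "F n = M n powr (1 - q) / (q - 1)" for n
  show "0 \<le> (M (Suc n) - M n) / M (Suc n) powr q" for n
    using \<open>incseq M\<close> by (simp add: incseq_SucD)
  show "(\<Sum>i<n. (M (Suc i) - M i) / M (Suc i) powr q) \<le> F 0" for n
  proof -
    have "(\<Sum>i<n. (M (Suc i) - M i) / M (Suc i) powr q) \<le> (\<Sum>i<n. F i - F (Suc i))"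
      using assms unfolding F_def diff_divide_distrib [symmetric]
      by (intro sum_mono diff_div_powr_le_powr_diff) (auto simp: incseq_SucD)
    also have "\<dots> = F 0 - F n"
      by (rule sum_lessThan_telescope')
    also have "\<dots> \<le> F 0"
      using \<open>q > 1\<close> by (simp add: F_def)
    finally show ?thesis .
  qed
qed

lemma summable_imp_Liminf_mult_le_0:
  fixes a :: "nat \<Rightarrow> real"
  assumes "summable a"
  shows "Liminf sequentially (\<lambda>n. ereal (real n * a n)) \<le> 0"
proof (rule ccontr)
  assume "\<not> ?thesis"
  then obtain e where e: "0 < e"
    and e_less: "ereal e < Liminf sequentially (\<lambda>n. ereal (real n * a n))"
    using ereal_dense2 by (metis not_le ereal_less(2))
  from less_LiminfD[OF e_less] obtain N where N: "\<And>n. n \<ge> N \<Longrightarrow> e < real n * a n"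
    unfolding eventually_sequentially by auto
  have "norm (e * inverse (real n)) \<le> a n" if "n \<ge> Suc N" for n
    using N[of n] that e by (simp add: field_simps)
  then have "summable (\<lambda>n. e * inverse (real n))"
    by (rule summable_comparison_test'[OF assms])
  then have "summable (\<lambda>n. inverse (real n))"
    using e by (simp add: summable_cmult_iff)
  then show False
    using not_summable_harmonic by blast
qed

theorem lemma5p1:
  fixes M :: "nat \<Rightarrow> real" and q :: real
  assumes "q > 1"
    and pos: "\<And>j. j \<ge> 1 \<Longrightarrow> M j > 0"
    and incr: "\<And>j. j \<ge> 1 \<Longrightarrow> M j \<le> M (Suc j)"
  shows "Liminf sequentially
           (\<lambda>j. ereal (real j * (M j - M (j - 1)) / (M j powr q))) = 0"
proof -
  define a where "a j = (M j - M (j - 1)) / M j powr q" for j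
  have "summable (\<lambda>n. (M (Suc (Suc n)) - M (Suc n)) / M (Suc (Suc n)) powr q)"
    using assms by (intro summable_increments_div_powr) (auto intro: incseq_SucI)
  then have "summable (\<lambda>n. a (n + 2))"
    by (simp add: a_def)
  then have "Liminf sequentially (\<lambda>j. ereal (real j * a j)) \<le> 0"
    by (intro summable_imp_Liminf_mult_le_0) (simp only: summable_iff_shift)
  moreover have "0 \<le> Liminf sequentially (\<lambda>j. ereal (real j * a j))"
  proof (intro Liminf_bounded eventually_sequentiallyI)
    fix j :: nat assume "2 \<le> j"
    then show "0 \<le> ereal (real j * a j)"
      using incr[of "j - 1"] by (simp add: a_def)
  qed
  ultimately show ?thesis
    by (simp add: a_def)
qed

end
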